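(* There exists a constant $c>0$ such that, for all $L \geq 1$ and densities $0<\rho \leq L^{2}$, \[ \mathbb{P}_{\rho}\left[\eta_{t}(0) \geq L^{d+4} \text{ for some } t \in [0,L]\right] \leq c\,e^{-L/c}. \]
   Context: Let $d\ge1$ and $p(\cdot)$ a nearest-neighbour probability distribution on $\mathbb{Z}^d$ (supported on $\{\pm e_i\}$, $e_i$ canonical basis) with $0<p(e_i)\le p(-e_i)<1$ for all $i$. Under $\mathbb{P}_\rho$, each site initially holds i.i.d. $\mathrm{Poisson}(\rho)$ particles which move as independent continuous-time random walks jumping at rate $1$ with increment law $p$; $\eta_t(x)$ is the number of particles at $x$ at time $t$. *)

theory Defs
  imports "HOL-Probability.Probability"
begin

text \<open>Sites of Z^d are functions 'd => int, with 'd a finite type, d = CARD('d).\<close>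

definition unit_vec :: "'d \<Rightarrow> ('d \<Rightarrow> int)" where
  "unit_vec i = (\<lambda>j. if j = i then 1 else 0)"

definition nn_law :: "('d::finite \<Rightarrow> int) pmf \<Rightarrow> bool" where
  "nn_law p \<longleftrightarrow>
     set_pmf p \<subseteq> {unit_vec i | i. True} \<union> {(\<lambda>j. - unit_vec i j) | i. True} \<and>
     (\<forall>i. 0 < pmf p (unit_vec i) \<and> pmf p (unit_vec i) \<le> pmf p (\<lambda>j. - unit_vec i j)
          \<and> pmf p (\<lambda>j. - unit_vec i j) < 1)"

type_synonym 'd irw_omega =
  "(('d \<Rightarrow> int) \<Rightarrow> nat) \<times> ((('d \<Rightarrow> int) \<times> nat \<times> nat) \<Rightarrow> real)
     \<times> ((('d \<Rightarrow> int) \<times> nat \<times> nat) \<Rightarrow> ('d \<Rightarrow> int))"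

text \<open>Probability space P_rho: omega = (N, tau, xi) where N x ~ Poisson(rho) is the
  initial number of particles at x (i.i.d.), tau (x,k,j) ~ Exp(1) is the j-th holding time
  of the k-th particle started at x, and xi (x,k,j) ~ p is its j-th jump increment;
  all independent.\<close>
definition irw_space :: "real \<Rightarrow> ('d::finite \<Rightarrow> int) pmf \<Rightarrow> 'd irw_omega measure" where
  "irw_space \<rho> p =
     (PiM UNIV (\<lambda>_::('d \<Rightarrow> int). measure_pmf (poisson_pmf \<rho>))) \<Otimes>\<^sub>M
     ((PiM UNIV (\<lambda>_::(('d \<Rightarrow> int) \<times> nat \<times> nat). density lborel (exponential_density 1))) \<Otimes>\<^sub>M
      (PiM UNIV (\<lambda>_::(('d \<Rightarrow> int) \<times> nat \<times> nat). measure_pmf p)))"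

text \<open>Position at time t of the k-th particle started at x: the continuous-time random
  walk which jumps at the times tau(x,k,0)+...+tau(x,k,j), with increments xi(x,k,j).\<close>
definition irw_pos :: "'d irw_omega \<Rightarrow> ('d \<Rightarrow> int) \<Rightarrow> nat \<Rightarrow> real \<Rightarrow> ('d \<Rightarrow> int)" where
  "irw_pos \<omega> x k t =
     (let \<tau> = fst (snd \<omega>); \<xi> = snd (snd \<omega>);
          J = {j. (\<Sum>i\<le>j. \<tau> (x, k, i)) \<le> t}
      in (\<lambda>i. x i + (\<Sum>j\<in>J. \<xi> (x, k, j) i)))"

definition irw_eta :: "'d irw_omega \<Rightarrow> real \<Rightarrow> ('d \<Rightarrow> int) \<Rightarrow> enat" where
  "irw_eta \<omega> t y =
     (let S = {(x, k). k < fst \<omega> x \<and> irw_pos \<omega> x k t = y}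
      in if finite S then enat (card S) else \<infinity>)"

end

theory Submission
  imports Defs
begin

text \<open>A particle started at \<open>x\<close> needs at least \<open>\<bar>x\<bar>\<^sub>1\<close> jumps to reach the origin, and the
  time of its \<open>n\<close>-th jump is a sum of \<open>n\<close> independent \<open>Exp(1)\<close> variables, which is at most \<open>L\<close>
  with probability at most \<open>exp (\<beta> L) / (1 + \<beta>) ^ n\<close>. There are \<open>Poisson(\<rho>)\<close> particles per
  site, and fewer than \<open>(1 + \<beta>) ^ n\<close> sites at distance \<open>n\<close> once \<open>\<beta>\<close> is large, so the
  probability that a particle from distance \<open>R = \<lceil>\<beta> L\<rceil>\<close> or more reaches the origin by time \<open>L\<close>
  is \<open>O(\<rho> exp (- \<beta> L))\<close>. On the complementary event all particles seen at the origin during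
  \<open>[0, L]\<close> started in the \<open>\<ell>\<^sup>1\<close>-ball of radius \<open>R\<close>, whose total initial mass is Poisson with
  mean \<open>O(L ^ (d + 2))\<close>; a Chernoff bound makes \<open>L ^ (d + 4)\<close> of them exponentially unlikely.

  The event is a union over uncountably many times \<open>t\<close>; it is measurable because \<open>t\<close> may be
  restricted to a countable set of candidates: rationals, jump times and explosion times.\<close>

definition l1_norm :: "('d::finite \<Rightarrow> int) \<Rightarrow> nat" where
  "l1_norm x = nat (\<Sum>i\<in>UNIV. \<bar>x i\<bar>)"

lemma of_nat_l1_norm: "int (l1_norm x) = (\<Sum>i\<in>UNIV. \<bar>x i\<bar>)"
  unfolding l1_norm_def by (simp add: sum_nonneg)

lemma l1_norm_uminus: "l1_norm (\<lambda>i. - x i) = l1_norm x"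
  by (simp add: l1_norm_def)

lemma l1_norm_sum_le:
  fixes \<xi> :: "'j \<Rightarrow> 'd::finite \<Rightarrow> int"
  shows "l1_norm (\<lambda>i. \<Sum>j\<in>J. \<xi> j i) \<le> (\<Sum>j\<in>J. l1_norm (\<xi> j))"
proof -
  have "(\<Sum>i\<in>UNIV. \<bar>\<Sum>j\<in>J. \<xi> j i\<bar>) \<le> (\<Sum>i\<in>UNIV. \<Sum>j\<in>J. \<bar>\<xi> j i\<bar>)"
    by (intro sum_mono sum_abs)
  also have "\<dots> = (\<Sum>j\<in>J. \<Sum>i\<in>UNIV. \<bar>\<xi> j i\<bar>)"
    by (rule sum.swap)
  finally show ?thesis
    by (simp add: of_nat_l1_norm flip: of_nat_le_iff[where 'a=int])
qed

lemma l1_norm_le_subset_box: "{x::'d::finite \<Rightarrow> int. l1_norm x \<le> n} \<subseteq> Pi\<^sub>E UNIV (\<lambda>_. {- int n..int n})"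
proof
  fix x :: "'d \<Rightarrow> int"
  assume "x \<in> {x. l1_norm x \<le> n}"
  then have "(\<Sum>i\<in>UNIV. \<bar>x i\<bar>) \<le> int n"
    by (simp add: l1_norm_def nat_le_iff)
  then have "\<bar>x i\<bar> \<le> int n" for i
    using member_le_sum[of i UNIV "\<lambda>i. \<bar>x i\<bar>"] by simp
  then show "x \<in> Pi\<^sub>E UNIV (\<lambda>_. {- int n..int n})"
    by (auto simp: PiE_iff abs_le_iff minus_le_iff)
qed

lemma finite_l1_norm_le: "finite {x::'d::finite \<Rightarrow> int. l1_norm x \<le> n}"
  by (rule finite_subset[OF l1_norm_le_subset_box]) (simp add: finite_PiE)

lemma card_l1_norm_le: "card {x::'d::finite \<Rightarrow> int. l1_norm x \<le> n} \<le> (2 * n + 1) ^ CARD('d)"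
proof -
  have "card {x::'d \<Rightarrow> int. l1_norm x \<le> n} \<le> card (Pi\<^sub>E (UNIV::'d set) (\<lambda>_. {- int n..int n}))"
    by (rule card_mono[OF _ l1_norm_le_subset_box]) (simp add: finite_PiE)
  also have "\<dots> = (2 * n + 1) ^ CARD('d)"
    by (simp add: card_PiE nat_add_distrib nat_mult_distrib)
  finally show ?thesis .
qed

lemma nn_integral_l1_norm_le:
  fixes g :: "nat \<Rightarrow> ennreal"
  shows "(\<integral>\<^sup>+x. g (l1_norm (x::'d::finite \<Rightarrow> int)) \<partial>count_space UNIV)
    \<le> (\<Sum>n. g n * of_nat ((2 * n + 1) ^ CARD('d)))"
proof -
  let ?sphere = "\<lambda>n. {x::'d \<Rightarrow> int. l1_norm x = n}"
  have finite_sphere: "finite (?sphere n)" for n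
    by (rule finite_subset[OF _ finite_l1_norm_le[of n]]) auto
  have "(\<integral>\<^sup>+x. g (l1_norm (x::'d \<Rightarrow> int)) \<partial>count_space UNIV)
      = (\<integral>\<^sup>+x. (\<Sum>n. g n * indicator (?sphere n) x) \<partial>count_space UNIV)"
  proof (intro nn_integral_cong)
    fix x :: "'d \<Rightarrow> int"
    have "(\<Sum>n. g n * indicator (?sphere n) x) = (\<Sum>n\<in>{l1_norm x}. g n * indicator (?sphere n) x)"
      by (rule suminf_finite) auto
    then show "g (l1_norm x) = (\<Sum>n. g n * indicator (?sphere n) x)"
      by simp
  qed
  also have "\<dots> = (\<Sum>n. \<integral>\<^sup>+x. g n * indicator (?sphere n) x \<partial>count_space UNIV)"
    by (rule nn_integral_suminf) simp
  also have "\<dots> = (\<Sum>n. g n * of_nat (card (?sphere n)))"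
    by (simp add: nn_integral_cmult finite_sphere)
  also have "\<dots> \<le> (\<Sum>n. g n * of_nat ((2 * n + 1) ^ CARD('d)))"
  proof (intro suminf_le summableI mult_left_mono)
    fix n
    have "card (?sphere n) \<le> card {x::'d \<Rightarrow> int. l1_norm x \<le> n}"
      by (intro card_mono finite_l1_norm_le) auto
    then show "of_nat (card (?sphere n)) \<le> (of_nat ((2 * n + 1) ^ CARD('d)) :: ennreal)"
      using card_l1_norm_le[of n, where 'd='d] by (simp only: of_nat_le_iff)
  qed simp_all
  finally show ?thesis .
qed

lemma nn_law_l1_norm:
  assumes "nn_law p" "v \<in> set_pmf p"
  shows "l1_norm v = 1"
proof -
  from assms obtain i where "v = unit_vec i \<or> v = (\<lambda>j. - unit_vec i j)"
    by (auto simp: nn_law_def)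
  then show ?thesis
    by (auto simp: l1_norm_def unit_vec_def if_distrib sum.If_cases)
qed

section \<open>Jump sequences and candidate times\<close>

definition jumps_until :: "(nat \<Rightarrow> real) \<Rightarrow> real \<Rightarrow> nat set" where
  "jumps_until S t = {j. S j \<le> t}"

definition same_jumps :: "(nat \<Rightarrow> real) \<Rightarrow> real \<Rightarrow> real \<Rightarrow> bool" where
  "same_jumps S t t' \<longleftrightarrow>
     jumps_until S t = jumps_until S t' \<or> (infinite (jumps_until S t) \<and> infinite (jumps_until S t'))"

lemma jumps_until_subset_lessThan_iff: "jumps_until S t \<subseteq> {..<n} \<longleftrightarrow> (\<forall>j\<ge>n. t < S j)"
  by (auto simp: jumps_until_def subset_eq) (meson leD leI)+

lemma finite_jumps_until_iff: "finite (jumps_until S t) \<longleftrightarrow> (\<exists>n. \<forall>j\<ge>n. t < S j)"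
  by (metis jumps_until_subset_lessThan_iff finite_nat_bounded finite_nat_iff_bounded)

lemma sum_jumps_until_eq:
  fixes g :: "nat \<Rightarrow> 'a::comm_monoid_add"
  assumes "jumps_until S t \<subseteq> {..<n}"
  shows "(\<Sum>j<n. if S j \<le> t then g j else 0) = (\<Sum>j\<in>jumps_until S t. g j)"
proof -
  have "{j\<in>{..<n}. S j \<le> t} = jumps_until S t"
    using assms by (auto simp: jumps_until_def)
  then show ?thesis
    by (simp flip: sum.inter_filter)
qed

lemma liminf_le_if_infinite_jumps_until:
  assumes "infinite (jumps_until S t)"
  shows "liminf (\<lambda>j. ereal (S j)) \<le> ereal t"
proof (rule ccontr)
  assume "\<not> ?thesis"
  then have "eventually (\<lambda>j. ereal t < ereal (S j)) sequentially"
    by (intro less_LiminfD) simp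
  then have "\<exists>n. \<forall>j\<ge>n. t < S j"
    by (simp add: eventually_sequentially)
  with assms show False
    by (simp add: finite_jumps_until_iff)
qed

lemma infinite_jumps_until_if_liminf_less:
  assumes "liminf (\<lambda>j. ereal (S j)) < ereal t"
  shows "infinite (jumps_until S t)"
proof
  assume "finite (jumps_until S t)"
  then obtain n where "\<forall>j\<ge>n. ereal t < ereal (S j)"
    by (auto simp: finite_jumps_until_iff)
  then have "ereal t \<le> liminf (\<lambda>j. ereal (S j))"
    by (intro Liminf_bounded) (auto simp: eventually_sequentially intro: less_imp_le)
  with assms show False
    by simp
qed

lemma jumps_until_eq_on_left_interval:
  assumes "finite (jumps_until S t0)" and "\<forall>j. S j \<noteq> t0"
  shows "\<exists>t1<t0. \<forall>t\<in>{t1..t0}. jumps_until S t = jumps_until S t0"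
proof -
  define t1 where "t1 = Max (S ` jumps_until S t0 \<union> {t0 - 1})"
  have fin: "finite (S ` jumps_until S t0 \<union> {t0 - 1})"
    using assms(1) by simp
  have "t1 < t0"
    unfolding t1_def using fin assms(2) by (subst Max_less_iff) (auto simp: jumps_until_def less_le)
  moreover have "jumps_until S t = jumps_until S t0" if "t \<in> {t1..t0}" for t
  proof
    show "jumps_until S t \<subseteq> jumps_until S t0"
      using that by (auto simp: jumps_until_def)
    show "jumps_until S t0 \<subseteq> jumps_until S t"
    proof
      fix j
      assume "j \<in> jumps_until S t0"
      then have "S j \<le> t1"
        unfolding t1_def using fin by (intro Max_ge) auto
      then show "j \<in> jumps_until S t"
        using that by (auto simp: jumps_until_def)
    qed
  qed
  ultimately show ?thesis
    by blast
qed

lemma infinite_jumps_until_on_left_interval: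
  assumes "liminf (\<lambda>j. ereal (S j)) < ereal t0"
  shows "\<exists>t1<t0. \<forall>t\<in>{t1..t0}. infinite (jumps_until S t)"
proof -
  let ?l = "liminf (\<lambda>j. ereal (S j))"
  obtain t1 where t1: "?l < ereal t1" "t1 < t0"
  proof (cases ?l)
    case (real r)
    with assms show ?thesis
      by (intro that[of "(r + t0) / 2"]) auto
  qed (use assms that[of "t0 - 1"] in auto)
  then have "infinite (jumps_until S t)" if "t \<in> {t1..t0}" for t
    using that by (intro infinite_jumps_until_if_liminf_less) (auto intro: less_le_trans)
  with t1(2) show ?thesis
    by blast
qed

lemma same_jumps_on_left_interval:
  assumes "\<forall>j. S j \<noteq> t0" and "real_of_ereal (liminf (\<lambda>j. ereal (S j))) \<noteq> t0"
  shows "\<exists>t1<t0. \<forall>t\<in>{t1..t0}. same_jumps S t t0"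
proof (cases "finite (jumps_until S t0)")
  case True
  with assms(1) show ?thesis
    unfolding same_jumps_def by (metis jumps_until_eq_on_left_interval)
next
  case False
  then have "liminf (\<lambda>j. ereal (S j)) < ereal t0"
    using liminf_le_if_infinite_jumps_until[OF False] assms(2) by (cases "liminf (\<lambda>j. ereal (S j))") auto
  with False show ?thesis
    unfolding same_jumps_def by (metis infinite_jumps_until_on_left_interval atLeastAtMost_iff order_refl)
qed

text \<open>The liminf of a jump sequence is its explosion time. Slightly to the left of a time that
  is neither a jump time nor an explosion time the set of jumps made does not change, so a rational
  time can be used instead.\<close>

definition candidate_times :: "('f \<Rightarrow> nat \<Rightarrow> real) \<Rightarrow> real set" where
  "candidate_times S = range real_of_rat \<union> range (\<lambda>(f, j). S f j)
     \<union> range (\<lambda>f. real_of_ereal (liminf (\<lambda>j. ereal (S f j))))"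

lemma exists_candidate_time:
  fixes S :: "'f \<Rightarrow> nat \<Rightarrow> real" and P :: "'f \<Rightarrow> real \<Rightarrow> bool"
  assumes "finite F"
    and invariant: "\<And>f t t'. f \<in> F \<Longrightarrow> same_jumps (S f) t t' \<Longrightarrow> P f t = P f t'"
    and t0: "t0 \<in> {0..L}" and holds: "\<forall>f\<in>F. P f t0"
  shows "\<exists>c\<in>candidate_times S. c \<in> {0..L} \<and> (\<forall>f\<in>F. P f c)"
proof (cases "t0 \<in> candidate_times S")
  case True
  with t0 holds show ?thesis
    by blast
next
  case False
  then have "t0 \<noteq> 0"
    by (metis UnCI candidate_times_def of_rat_0 rangeI)
  with t0 have "0 < t0"
    by simp
  have "\<exists>t1<t0. \<forall>t\<in>{t1..t0}. same_jumps (S f) t t0" for f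
    using False by (intro same_jumps_on_left_interval) (auto simp: candidate_times_def)
  then obtain t1 where t1: "\<And>f. t1 f < t0" "\<And>f t. t \<in> {t1 f..t0} \<Longrightarrow> same_jumps (S f) t t0"
    by metis
  define ts where "ts = Max (insert 0 (t1 ` F))"
  have fin: "finite (insert 0 (t1 ` F))"
    using \<open>finite F\<close> by simp
  have "ts < t0"
    unfolding ts_def using fin \<open>0 < t0\<close> t1(1) by (subst Max_less_iff) auto
  then obtain q where q: "q \<in> \<rat>" "ts < q" "q < t0"
    using Rats_dense_in_real by blast
  have "0 \<le> ts"
    unfolding ts_def using fin by (intro Max_ge) auto
  have ts_ge: "t1 f \<le> ts" if "f \<in> F" for f
    unfolding ts_def using fin that by (intro Max_ge) auto
  have "q \<in> {0..L}"
    using q t0 \<open>0 \<le> ts\<close> by auto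
  moreover have "P f q" if "f \<in> F" for f
  proof -
    have "same_jumps (S f) q t0"
      using q ts_ge[OF that] by (intro t1(2)) auto
    with invariant[OF that] holds that show ?thesis
      by blast
  qed
  moreover have "q \<in> candidate_times S"
    using q(1) by (auto simp: Rats_def candidate_times_def)
  ultimately show ?thesis
    by blast
qed

type_synonym 'd particle = "('d \<Rightarrow> int) \<times> nat"

definition jump_time :: "'d irw_omega \<Rightarrow> 'd particle \<Rightarrow> nat \<Rightarrow> real" where
  "jump_time \<omega> f j = (\<Sum>i\<le>j. fst (snd \<omega>) (fst f, snd f, i))"

definition particle_at :: "'d irw_omega \<Rightarrow> 'd particle \<Rightarrow> real \<Rightarrow> ('d \<Rightarrow> int) \<Rightarrow> bool" where
  "particle_at \<omega> f t y \<longleftrightarrow> snd f < fst \<omega> (fst f) \<and> irw_pos \<omega> (fst f) (snd f) t = y"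

lemma irw_pos_eq:
  "irw_pos \<omega> x k t = (\<lambda>i. x i + (\<Sum>j\<in>jumps_until (jump_time \<omega> (x, k)) t. snd (snd \<omega>) (x, k, j) i))"
  by (simp add: irw_pos_def jumps_until_def jump_time_def Let_def)

lemma irw_pos_cong:
  "same_jumps (jump_time \<omega> (x, k)) t t' \<Longrightarrow> irw_pos \<omega> x k t = irw_pos \<omega> x k t'"
  unfolding same_jumps_def irw_pos_eq by auto

lemma particle_at_cong:
  "same_jumps (jump_time \<omega> f) t t' \<Longrightarrow> particle_at \<omega> f t y = particle_at \<omega> f t' y"
  by (cases f) (simp add: particle_at_def irw_pos_cong)

definition admissible :: "('d \<Rightarrow> int) pmf \<Rightarrow> 'd irw_omega \<Rightarrow> bool" where
  "admissible p \<omega> \<longleftrightarrow> (\<forall>y. 0 \<le> fst (snd \<omega>) y \<and> snd (snd \<omega>) y \<in> set_pmf p)"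

lemma jump_time_mono:
  assumes "admissible p \<omega>" and "i \<le> j"
  shows "jump_time \<omega> f i \<le> jump_time \<omega> f j"
  using assms unfolding jump_time_def admissible_def by (intro sum_mono2) auto

lemma jump_time_l1_distance_le:
  fixes x y :: "'d::finite \<Rightarrow> int"
  assumes "nn_law p" and "admissible p \<omega>" and "irw_pos \<omega> x k t = y" and "1 \<le> l1_norm (x - y)"
  shows "jump_time \<omega> (x, k) (l1_norm (x - y) - 1) \<le> t"
proof -
  let ?J = "jumps_until (jump_time \<omega> (x, k)) t"
  have "finite ?J"
  proof (rule ccontr)
    assume "infinite ?J"
    then have "x = y"
      using assms(3) by (simp add: irw_pos_eq)
    with assms(4) show False
      by (simp add: l1_norm_def)
  qed
  have "y i = x i + (\<Sum>j\<in>?J. snd (snd \<omega>) (x, k, j) i)" for i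
    using assms(3) unfolding irw_pos_eq by auto
  then have "x - y = (\<lambda>i. - (\<Sum>j\<in>?J. snd (snd \<omega>) (x, k, j) i))"
    by (simp add: fun_eq_iff)
  then have "l1_norm (x - y) \<le> (\<Sum>j\<in>?J. l1_norm (snd (snd \<omega>) (x, k, j)))"
    using l1_norm_sum_le[of "\<lambda>j. snd (snd \<omega>) (x, k, j)" ?J] by (simp add: l1_norm_uminus)
  also have "\<dots> = card ?J"
    using assms(1,2) by (simp add: admissible_def nn_law_l1_norm)
  finally have card_J: "l1_norm (x - y) \<le> card ?J" .
  with assms(4) have "?J \<noteq> {}"
    by auto
  define m where "m = Max ?J"
  have "m \<in> ?J" and "?J \<subseteq> {..m}"
    using \<open>finite ?J\<close> \<open>?J \<noteq> {}\<close> by (auto simp: m_def)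
  then have "l1_norm (x - y) - 1 \<le> m"
    using card_J card_mono[of "{..m}" ?J] by simp
  then have "jump_time \<omega> (x, k) (l1_norm (x - y) - 1) \<le> jump_time \<omega> (x, k) m"
    by (rule jump_time_mono[OF assms(2)])
  also have "\<dots> \<le> t"
    using \<open>m \<in> ?J\<close> by (simp add: jumps_until_def)
  finally show ?thesis .
qed

lemma irw_eta_le_initial_mass:
  assumes "finite B" and "\<And>x k. k < fst \<omega> x \<Longrightarrow> irw_pos \<omega> x k t = y \<Longrightarrow> x \<in> B"
  shows "irw_eta \<omega> t y \<le> enat (\<Sum>x\<in>B. fst \<omega> x)"
proof -
  let ?S = "{(x, k). k < fst \<omega> x \<and> irw_pos \<omega> x k t = y}"
  have "?S \<subseteq> Sigma B (\<lambda>x. {..<fst \<omega> x})"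
    using assms(2) by auto
  moreover have "finite (Sigma B (\<lambda>x. {..<fst \<omega> x}))"
    using assms(1) by simp
  ultimately have "finite ?S" and "card ?S \<le> card (Sigma B (\<lambda>x. {..<fst \<omega> x}))"
    by (auto intro: finite_subset card_mono)
  with assms(1) show ?thesis
    by (simp add: irw_eta_def card_SigmaI)
qed

section \<open>Measurability of the occupation event\<close>

lemma measurable_initial_count[measurable]:
  "(\<lambda>\<omega>::'d::finite irw_omega. fst \<omega> x) \<in> measurable (irw_space \<rho> p) (count_space UNIV)"
proof -
  have "(\<lambda>\<omega>::'d irw_omega. fst \<omega> x) \<in> measurable (irw_space \<rho> p) (measure_pmf (poisson_pmf \<rho>))"
    unfolding irw_space_def by measurable
  then show ?thesis
    by (rule measurable_compose) simp
qed

lemma measurable_increment[measurable]: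
  "(\<lambda>\<omega>::'d::finite irw_omega. snd (snd \<omega>) y i) \<in> measurable (irw_space \<rho> p) (count_space UNIV)"
proof -
  have "(\<lambda>\<omega>::'d irw_omega. snd (snd \<omega>) y) \<in> measurable (irw_space \<rho> p) (measure_pmf p)"
    unfolding irw_space_def by measurable
  then show ?thesis
    by (rule measurable_compose) simp
qed

lemma borel_measurable_increment[measurable]:
  "(\<lambda>\<omega>::'d::finite irw_omega. real_of_int (snd (snd \<omega>) y i)) \<in> borel_measurable (irw_space \<rho> p)"
  using measurable_increment by (rule measurable_compose) simp

lemma borel_measurable_holding_time[measurable]:
  "(\<lambda>\<omega>::'d::finite irw_omega. fst (snd \<omega>) y) \<in> borel_measurable (irw_space \<rho> p)"
  unfolding irw_space_def by measurable

lemma borel_measurable_jump_time[measurable]: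
  "(\<lambda>\<omega>. jump_time \<omega> f j) \<in> borel_measurable (irw_space \<rho> p)"
  unfolding jump_time_def by measurable

text \<open>An exploded particle sits at its starting point, since the sum in \<^const>\<open>irw_pos\<close> then
  ranges over an infinite set. The increments are summed in \<^typ>\<open>real\<close> because \<^typ>\<open>int\<close>
  carries no topology, so that the right-hand side is visibly measurable.\<close>
lemma particle_at_iff:
  fixes \<omega> :: "'d::finite irw_omega" and x :: "'d \<Rightarrow> int" and k :: nat
  defines "S \<equiv> jump_time \<omega> (x, k)" and "\<xi> \<equiv> \<lambda>j. snd (snd \<omega>) (x, k, j)"
  shows "particle_at \<omega> (x, k) t y \<longleftrightarrow> k < fst \<omega> x \<and>
    ((\<exists>n. (\<forall>j\<ge>n. t < S j) \<and> (\<forall>i. real_of_int (x i)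
        + (\<Sum>j<n. if S j \<le> t then real_of_int (\<xi> j i) else 0) = real_of_int (y i)))
     \<or> ((\<forall>n. \<exists>j\<ge>n. S j \<le> t) \<and> x = y))"
proof (cases "finite (jumps_until S t)")
  case True
  then obtain n where n: "jumps_until S t \<subseteq> {..<n}"
    using finite_nat_bounded by blast
  have "irw_pos \<omega> x k t = y \<longleftrightarrow>
      (\<forall>i. real_of_int (x i) + (\<Sum>j\<in>jumps_until S t. real_of_int (\<xi> j i)) = real_of_int (y i))"
    unfolding irw_pos_eq fun_eq_iff S_def \<xi>_def of_int_sum[symmetric]
    by (simp only: of_int_add[symmetric] of_int_eq_iff)
  also have "\<dots> \<longleftrightarrow> (\<exists>n. (\<forall>j\<ge>n. t < S j) \<and> (\<forall>i. real_of_int (x i)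
        + (\<Sum>j<n. if S j \<le> t then real_of_int (\<xi> j i) else 0) = real_of_int (y i)))"
    using n by (auto simp: sum_jumps_until_eq jumps_until_subset_lessThan_iff[symmetric])
  moreover have "\<not> (\<forall>n. \<exists>j\<ge>n. S j \<le> t)"
    using True finite_jumps_until_iff by (meson leD)
  ultimately show ?thesis
    unfolding particle_at_def by (simp only: fst_conv snd_conv) blast
next
  case False
  then have "irw_pos \<omega> x k t = x" and "\<forall>n. \<exists>j\<ge>n. S j \<le> t"
    using finite_jumps_until_iff by (auto simp: irw_pos_eq S_def[symmetric] not_less)
  with False finite_jumps_until_iff show ?thesis
    by (auto simp: particle_at_def)
qed

lemma pred_particle_at[measurable]:
  assumes [measurable]: "c \<in> borel_measurable (irw_space \<rho> p)"
  shows "Measurable.pred (irw_space \<rho> p) (\<lambda>\<omega>. particle_at \<omega> f (c \<omega>) y)"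
  by (cases f) (simp only: particle_at_iff, measurable)

lemma ereal_le_card_iff_distinct_list:
  fixes S :: "'a set" and K :: real
  shows "ereal K \<le> ereal_of_enat (if finite S then enat (card S) else \<infinity>) \<longleftrightarrow>
    (\<exists>F. distinct F \<and> length F = nat \<lceil>K\<rceil> \<and> set F \<subseteq> S)"
proof
  assume K: "ereal K \<le> ereal_of_enat (if finite S then enat (card S) else \<infinity>)"
  obtain T where T: "T \<subseteq> S" "finite T" "card T = nat \<lceil>K\<rceil>"
  proof (cases "finite S")
    case True
    with K have "nat \<lceil>K\<rceil> \<le> card S"
      by simp
    with True show ?thesis
      by (metis obtain_subset_with_card_n rev_finite_subset that)
  next
    case False
    then show ?thesis
      using infinite_arbitrarily_large that by metis
  qed
  obtain F where F: "set F = T" "distinct F"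
    using T(2) finite_distinct_list by blast
  then have "length F = nat \<lceil>K\<rceil>"
    using T(3) distinct_card by metis
  with F T(1) show "\<exists>F. distinct F \<and> length F = nat \<lceil>K\<rceil> \<and> set F \<subseteq> S"
    by blast
next
  assume "\<exists>F. distinct F \<and> length F = nat \<lceil>K\<rceil> \<and> set F \<subseteq> S"
  then obtain F where F: "distinct F" "length F = nat \<lceil>K\<rceil>" "set F \<subseteq> S"
    by blast
  show "ereal K \<le> ereal_of_enat (if finite S then enat (card S) else \<infinity>)"
  proof (cases "finite S")
    case True
    then have "nat \<lceil>K\<rceil> \<le> card S"
      using F card_mono distinct_card by metis
    with True show ?thesis
      by simp
  qed simp
qed

lemma irw_eta_eq_card:
  "irw_eta \<omega> t y = (if finite {f. particle_at \<omega> f t y} then enat (card {f. particle_at \<omega> f t y}) else \<infinity>)"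
  by (simp add: irw_eta_def particle_at_def case_prod_beta' Let_def cong: conj_cong)

lemma ereal_le_irw_eta_iff:
  "ereal K \<le> ereal_of_enat (irw_eta \<omega> t y) \<longleftrightarrow>
    (\<exists>F. distinct F \<and> length F = nat \<lceil>K\<rceil> \<and> (\<forall>f\<in>set F. particle_at \<omega> f t y))"
  unfolding irw_eta_eq_card ereal_le_card_iff_distinct_list by blast

definition candidate_time :: "rat + ('d particle \<times> nat) + 'd particle \<Rightarrow> 'd irw_omega \<Rightarrow> real" where
  "candidate_time c \<omega> = (case c of
      Inl q \<Rightarrow> of_rat q
    | Inr (Inl (f, j)) \<Rightarrow> jump_time \<omega> f j
    | Inr (Inr f) \<Rightarrow> real_of_ereal (liminf (\<lambda>j. ereal (jump_time \<omega> f j))))"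

lemma candidate_times_jump_time: "candidate_times (jump_time \<omega>) = range (\<lambda>c. candidate_time c \<omega>)"
proof (intro equalityI subsetI)
  fix t
  assume "t \<in> candidate_times (jump_time \<omega>)"
  then consider q where "t = of_rat q" | f j where "t = jump_time \<omega> f j"
    | f where "t = real_of_ereal (liminf (\<lambda>j. ereal (jump_time \<omega> f j)))"
    unfolding candidate_times_def by auto
  then show "t \<in> range (\<lambda>c. candidate_time c \<omega>)"
  proof cases
    case 1
    then show ?thesis
      using rangeI[of "\<lambda>c. candidate_time c \<omega>" "Inl q"] by (simp add: candidate_time_def)
  next
    case 2
    then show ?thesis
      using rangeI[of "\<lambda>c. candidate_time c \<omega>" "Inr (Inl (f, j))"] by (simp add: candidate_time_def)
  next
    case 3
    then show ?thesis
      using rangeI[of "\<lambda>c. candidate_time c \<omega>" "Inr (Inr f)"] by (simp add: candidate_time_def)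
  qed
qed (auto simp: candidate_time_def candidate_times_def split: sum.split)

lemma borel_measurable_candidate_time[measurable]:
  "candidate_time c \<in> borel_measurable (irw_space \<rho> p)"
proof (cases c)
  case (Inr c')
  then show ?thesis
    by (cases c') (auto simp: candidate_time_def[abs_def] case_prod_beta')
qed (simp add: candidate_time_def[abs_def])

definition occupation_event ::
    "real \<Rightarrow> ('d::finite \<Rightarrow> int) pmf \<Rightarrow> real \<Rightarrow> real \<Rightarrow> ('d \<Rightarrow> int) \<Rightarrow> 'd irw_omega set" where
  "occupation_event \<rho> p L K y =
     {\<omega> \<in> space (irw_space \<rho> p). \<exists>t\<in>{0..L}. ereal K \<le> ereal_of_enat (irw_eta \<omega> t y)}"

lemma occupation_event_eq_candidates:
  fixes y :: "'d::finite \<Rightarrow> int"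
  shows "occupation_event \<rho> p L K y = {\<omega> \<in> space (irw_space \<rho> p). \<exists>F. distinct F \<and> length F = nat \<lceil>K\<rceil> \<and>
     (\<exists>c. candidate_time c \<omega> \<in> {0..L} \<and> (\<forall>f\<in>set F. particle_at \<omega> f (candidate_time c \<omega>) y))}"
  unfolding occupation_event_def
proof (intro Collect_cong conj_cong refl iffI)
  fix \<omega> :: "'d::finite irw_omega"
  assume "\<exists>t\<in>{0..L}. ereal K \<le> ereal_of_enat (irw_eta \<omega> t y)"
  then obtain t F where t: "t \<in> {0..L}" and F: "distinct F" "length F = nat \<lceil>K\<rceil>"
    "\<forall>f\<in>set F. particle_at \<omega> f t y"
    unfolding ereal_le_irw_eta_iff by blast
  have "\<exists>c\<in>candidate_times (jump_time \<omega>). c \<in> {0..L} \<and> (\<forall>f\<in>set F. particle_at \<omega> f c y)"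
    by (rule exists_candidate_time[where P = "\<lambda>f t. particle_at \<omega> f t y", OF finite_set _ t F(3)])
      (metis particle_at_cong)
  with F(1,2) show "\<exists>F. distinct F \<and> length F = nat \<lceil>K\<rceil> \<and>
      (\<exists>c. candidate_time c \<omega> \<in> {0..L} \<and> (\<forall>f\<in>set F. particle_at \<omega> f (candidate_time c \<omega>) y))"
    unfolding candidate_times_jump_time by blast
qed (unfold ereal_le_irw_eta_iff, force)

lemma sets_occupation_event[measurable]: "occupation_event \<rho> p L K y \<in> sets (irw_space \<rho> p)"
  unfolding occupation_event_eq_candidates by measurable

abbreviation initial_counts :: "real \<Rightarrow> (('d::finite \<Rightarrow> int) \<Rightarrow> nat) measure" where
  "initial_counts \<rho> \<equiv> PiM UNIV (\<lambda>_. measure_pmf (poisson_pmf \<rho>))"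

abbreviation holding_times :: "(('d::finite \<Rightarrow> int) \<times> nat \<times> nat \<Rightarrow> real) measure" where
  "holding_times \<equiv> PiM UNIV (\<lambda>_. density lborel (exponential_density 1))"

abbreviation increments :: "('d::finite \<Rightarrow> int) pmf \<Rightarrow> (('d \<Rightarrow> int) \<times> nat \<times> nat \<Rightarrow> 'd \<Rightarrow> int) measure" where
  "increments p \<equiv> PiM UNIV (\<lambda>_. measure_pmf p)"

lemma nn_integral_PiM_prod:
  fixes M :: "'i \<Rightarrow> 'a measure"
  assumes "\<And>i. prob_space (M i)" and "finite J" "J \<subseteq> I"
    and f[measurable]: "\<And>i. i \<in> J \<Longrightarrow> f i \<in> borel_measurable (M i)"
  shows "(\<integral>\<^sup>+\<omega>. (\<Prod>i\<in>J. f i (\<omega> i)) \<partial>PiM I M) = (\<Prod>i\<in>J. \<integral>\<^sup>+x. f i x \<partial>M i)"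
proof -
  interpret product_prob_space M I
    using assms(1) by (rule product_prob_spaceI)
  have m: "(\<lambda>y. \<Prod>i\<in>J. f i (y i)) \<in> borel_measurable (PiM J M)"
    by measurable
  have "(\<integral>\<^sup>+\<omega>. (\<Prod>i\<in>J. f i (\<omega> i)) \<partial>PiM I M) = (\<integral>\<^sup>+\<omega>. (\<Prod>i\<in>J. f i (restrict \<omega> J i)) \<partial>PiM I M)"
    by (intro nn_integral_cong prod.cong) auto
  also have "\<dots> = (\<integral>\<^sup>+y. (\<Prod>i\<in>J. f i (y i)) \<partial>distr (PiM I M) (PiM J M) (\<lambda>\<omega>. restrict \<omega> J))"
    using m \<open>J \<subseteq> I\<close> by (subst nn_integral_distr) (auto intro: measurable_restrict_subset)
  also have "\<dots> = (\<integral>\<^sup>+y. (\<Prod>i\<in>J. f i (y i)) \<partial>PiM J M)"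
    using assms(2,3) by (simp add: distr_PiM_restrict_finite)
  also have "\<dots> = (\<Prod>i\<in>J. \<integral>\<^sup>+x. f i x \<partial>M i)"
    using assms(2,3) by (intro product_nn_integral_prod f) auto
  finally show ?thesis .
qed

lemma measurable_PiM_pmf_component[measurable]:
  "(\<lambda>\<omega>. \<omega> i) \<in> measurable (PiM UNIV (\<lambda>_. measure_pmf q)) (count_space UNIV)"
  by (rule measurable_compose[OF measurable_component_singleton]) simp_all

lemma emeasure_Times_space:
  assumes "prob_space M2" and "A \<in> sets M1"
  shows "emeasure (M1 \<Otimes>\<^sub>M M2) (A \<times> space M2) = emeasure M1 A"
  using assms by (simp add: prob_space.emeasure_space_1 prob_space_imp_sigma_finite
      sigma_finite_measure.emeasure_pair_measure_Times)

lemma AE_pair_fstI: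
  assumes "prob_space M2" and "AE x in M1. P x"
  shows "AE \<omega> in M1 \<Otimes>\<^sub>M M2. P (fst \<omega>)"
  using assms by (metis AE_distrD measurable_fst prob_space.distr_pair_fst)

lemma AE_pair_sndI:
  assumes "prob_space M1" and "sigma_finite_measure M2" and "AE y in M2. P y"
  shows "AE \<omega> in M1 \<Otimes>\<^sub>M M2. P (snd \<omega>)"
proof -
  have "distr (M1 \<Otimes>\<^sub>M M2) M2 snd = M2"
  proof (rule measure_eqI)
    fix A
    assume "A \<in> sets (distr (M1 \<Otimes>\<^sub>M M2) M2 snd)"
    then have A: "A \<in> sets M2"
      by simp
    then have "emeasure (distr (M1 \<Otimes>\<^sub>M M2) M2 snd) A = emeasure (M1 \<Otimes>\<^sub>M M2) (space M1 \<times> A)"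
      by (auto simp: emeasure_distr space_pair_measure dest: sets.sets_into_space
          intro!: arg_cong2[where f = emeasure])
    with A assms(1,2) show "emeasure (distr (M1 \<Otimes>\<^sub>M M2) M2 snd) A = emeasure M2 A"
      by (simp add: sigma_finite_measure.emeasure_pair_measure_Times prob_space.emeasure_space_1)
  qed simp
  with assms(3) show ?thesis
    by (metis AE_distrD measurable_snd)
qed

lemma emeasure_UN_countable_le:
  assumes sets[measurable]: "\<And>i. i \<in> I \<Longrightarrow> X i \<in> sets M" and "countable I"
  shows "emeasure M (\<Union>(X ` I)) \<le> (\<integral>\<^sup>+i. emeasure M (X i) \<partial>count_space I)"
proof -
  have indicator_le: "indicator (\<Union>(X ` I)) x \<le> (\<integral>\<^sup>+i. indicator (X i) x \<partial>count_space I)" for x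
  proof (cases "x \<in> \<Union>(X ` I)")
    case True
    then obtain j where j: "j \<in> I" "x \<in> X j"
      by auto
    then have "(1::ennreal) = (\<integral>\<^sup>+i. indicator {j} i \<partial>count_space I)"
      by (simp add: emeasure_count_space_finite)
    also have "\<dots> \<le> (\<integral>\<^sup>+i. indicator (X i) x \<partial>count_space I)"
      using j by (intro nn_integral_mono) (auto split: split_indicator)
    finally show ?thesis
      using True by simp
  qed simp
  note sets.countable_UN'[unfolded subset_eq, measurable]
  have "emeasure M (\<Union>(X ` I)) = (\<integral>\<^sup>+x. indicator (\<Union>(X ` I)) x \<partial>M)"
    using \<open>countable I\<close> by simp
  also have "\<dots> \<le> (\<integral>\<^sup>+x. \<integral>\<^sup>+i. indicator (X i) x \<partial>count_space I \<partial>M)"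
    by (intro nn_integral_mono indicator_le)
  also have "\<dots> = (\<integral>\<^sup>+i. \<integral>\<^sup>+x. indicator (X i) x \<partial>M \<partial>count_space I)"
    using \<open>countable I\<close> by (intro nn_integral_count_space_nn_integral) simp_all
  also have "\<dots> = (\<integral>\<^sup>+i. emeasure M (X i) \<partial>count_space I)"
    by (simp cong: nn_integral_cong_simp)
  finally show ?thesis .
qed

lemma prob_space_irw_space: "prob_space (irw_space \<rho> p)"
  unfolding irw_space_def
  by (intro prob_space_pair prob_space_PiM prob_space_exponential_density)
    (simp_all add: prob_space_measure_pmf)

lemma emeasure_irw_space_Times:
  fixes p :: "('d::finite \<Rightarrow> int) pmf"
  assumes "A \<in> sets (initial_counts \<rho>)" and "E \<in> sets holding_times"
  shows "emeasure (irw_space \<rho> p) (A \<times> (E \<times> space (increments p)))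
    = emeasure (initial_counts \<rho>) A * emeasure holding_times E"
  using assms unfolding irw_space_def
  by (simp add: emeasure_Times_space prob_space_PiM prob_space_measure_pmf prob_space_imp_sigma_finite
      prob_space_pair prob_space_exponential_density sigma_finite_measure.emeasure_pair_measure_Times)

lemma AE_admissible:
  fixes p :: "('d::finite \<Rightarrow> int) pmf"
  shows "AE \<omega> in irw_space \<rho> p. admissible p \<omega>"
proof -
  let ?T = "holding_times :: (('d \<Rightarrow> int) \<times> nat \<times> nat \<Rightarrow> real) measure"
  let ?X = "increments p"
  interpret T: product_prob_space "\<lambda>_::('d \<Rightarrow> int) \<times> nat \<times> nat. density lborel (exponential_density 1)" UNIV
    by (rule product_prob_spaceI) (simp add: prob_space_exponential_density)
  interpret X: product_prob_space "\<lambda>_::('d \<Rightarrow> int) \<times> nat \<times> nat. measure_pmf p" UNIV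
    by (rule product_prob_spaceI) (simp add: prob_space_measure_pmf)
  have nonneg: "AE s in density lborel (exponential_density 1). 0 \<le> s"
    by (subst AE_density) (auto simp: exponential_density_def)
  have "AE \<tau> in ?T. \<forall>y. 0 \<le> \<tau> y"
    by (subst AE_all_countable) (intro allI T.AE_component nonneg UNIV_I)
  then have "AE z in ?T \<Otimes>\<^sub>M ?X. \<forall>y. 0 \<le> fst z y"
    by (rule AE_pair_fstI[OF X.prob_space_axioms])
  moreover have "AE \<xi> in ?X. \<forall>y. \<xi> y \<in> set_pmf p"
    by (subst AE_all_countable) (intro allI X.AE_component AE_measure_pmf UNIV_I)
  then have "AE z in ?T \<Otimes>\<^sub>M ?X. \<forall>y. snd z y \<in> set_pmf p"
    by (rule AE_pair_sndI[OF T.prob_space_axioms prob_space_imp_sigma_finite[OF X.prob_space_axioms]])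
  ultimately have "AE z in ?T \<Otimes>\<^sub>M ?X. \<forall>y. 0 \<le> fst z y \<and> snd z y \<in> set_pmf p"
    by eventually_elim simp
  then show ?thesis
    unfolding irw_space_def admissible_def
    by (intro AE_pair_sndI prob_space_PiM prob_space_imp_sigma_finite prob_space_pair)
      (simp_all add: prob_space_measure_pmf prob_space_exponential_density)
qed

lemma nn_integral_poisson_exp:
  assumes "0 < \<rho>"
  shows "(\<integral>\<^sup>+n. ennreal (exp (s * real n)) \<partial>measure_pmf (poisson_pmf \<rho>)) = ennreal (exp (\<rho> * (exp s - 1)))"
proof -
  have sums: "(\<lambda>n. exp (-\<rho>) * ((\<rho> * exp s) ^ n / fact n)) sums (exp (-\<rho>) * exp (\<rho> * exp s))"
    using exp_converges[of "\<rho> * exp s"] by (intro sums_mult) (simp add: divide_inverse mult.commute)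
  have "(\<integral>\<^sup>+n. ennreal (exp (s * real n)) \<partial>measure_pmf (poisson_pmf \<rho>))
      = (\<Sum>n. ennreal (exp (-\<rho>) * ((\<rho> * exp s) ^ n / fact n)))"
    using assms by (simp add: nn_integral_measure_pmf nn_integral_count_space_nat
        ennreal_mult'[symmetric] power_mult_distrib exp_of_nat_mult[symmetric] mult_ac)
  also have "\<dots> = ennreal (exp (-\<rho>) * exp (\<rho> * exp s))"
    using sums assms by (intro suminf_ennreal2[THEN trans] arg_cong[where f = ennreal] sums_unique[symmetric])
      (auto intro: sums_summable)
  also have "exp (-\<rho>) * exp (\<rho> * exp s) = exp (\<rho> * (exp s - 1))"
    by (simp add: mult_exp_exp algebra_simps)
  finally show ?thesis .
qed

lemma nn_integral_poisson_mean:
  assumes "0 < \<rho>"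
  shows "(\<integral>\<^sup>+n. ennreal (real n) \<partial>measure_pmf (poisson_pmf \<rho>)) = ennreal \<rho>"
proof -
  define g where "g n = exp (-\<rho>) * (real n * \<rho> ^ n / fact n)" for n
  have "(\<lambda>n. g (Suc n)) = (\<lambda>n. exp (-\<rho>) * \<rho> * (\<rho> ^ n / fact n))"
    by (simp add: g_def fun_eq_iff fact_Suc del: of_nat_Suc)
  moreover have "(\<lambda>n. exp (-\<rho>) * \<rho> * (\<rho> ^ n / fact n)) sums (exp (-\<rho>) * \<rho> * exp \<rho>)"
    using exp_converges[of \<rho>] by (intro sums_mult) (simp add: divide_inverse mult.commute)
  ultimately have "(\<lambda>n. g (Suc n)) sums \<rho>"
    by (simp add: exp_minus field_simps)
  then have "g sums (\<rho> + g 0)"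
    by (rule sums_Suc_iff[THEN iffD1])
  then have "g sums \<rho>"
    by (simp add: g_def)
  have "(\<integral>\<^sup>+n. ennreal (real n) \<partial>measure_pmf (poisson_pmf \<rho>)) = (\<Sum>n. ennreal (g n))"
    using assms by (simp add: nn_integral_measure_pmf nn_integral_count_space_nat
        ennreal_mult'[symmetric] g_def mult_ac)
  also have "\<dots> = ennreal (\<Sum>n. g n)"
    using assms by (intro suminf_ennreal2 sums_summable[OF \<open>g sums \<rho>\<close>]) (simp add: g_def)
  also have "(\<Sum>n. g n) = \<rho>"
    using \<open>g sums \<rho>\<close> by (rule sums_unique[symmetric])
  finally show ?thesis .
qed

lemma suminf_emeasure_greaterThan_pmf:
  fixes q :: "nat pmf"
  shows "(\<Sum>k. emeasure (measure_pmf q) {k<..}) = (\<integral>\<^sup>+n. ennreal (real n) \<partial>measure_pmf q)"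
proof -
  have "(\<Sum>k. emeasure (measure_pmf q) {k<..}) = (\<Sum>k. \<integral>\<^sup>+n. indicator {k<..} n \<partial>measure_pmf q)"
    by simp
  also have "\<dots> = (\<integral>\<^sup>+n. (\<Sum>k. indicator {k<..} n) \<partial>measure_pmf q)"
    by (rule nn_integral_suminf[symmetric]) simp
  also have "\<dots> = (\<integral>\<^sup>+n. ennreal (real n) \<partial>measure_pmf q)"
  proof (intro nn_integral_cong)
    fix n :: nat
    have "(\<Sum>k. indicator {k<..} n :: ennreal) = (\<Sum>k<n. indicator {k<..} n)"
      by (rule suminf_finite) (auto split: split_indicator)
    then show "(\<Sum>k. indicator {k<..} n :: ennreal) = ennreal (real n)"
      by (simp add: ennreal_of_nat_eq_real_of_nat)
  qed
  finally show ?thesis .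
qed

lemma nn_integral_exponential_exp:
  assumes "0 < l" and "0 \<le> \<beta>"
  shows "(\<integral>\<^sup>+s. ennreal (exp (- \<beta> * s)) \<partial>density lborel (exponential_density l)) = ennreal (l / (l + \<beta>))"
proof -
  have "(\<integral>\<^sup>+s. ennreal (exp (- \<beta> * s)) \<partial>density lborel (exponential_density l))
      = (\<integral>\<^sup>+s. ennreal (l / (l + \<beta>)) * ennreal (exponential_density (l + \<beta>) s) \<partial>lborel)"
    using assms by (subst nn_integral_density) (auto intro!: nn_integral_cong
        simp: exponential_density_def ennreal_mult'[symmetric] mult_exp_exp field_simps)
  also have "\<dots> = ennreal (l / (l + \<beta>)) * emeasure (density lborel (exponential_density (l + \<beta>))) UNIV"
    by (simp add: nn_integral_cmult emeasure_density)
  also have "emeasure (density lborel (exponential_density (l + \<beta>))) UNIV = 1"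
    using assms prob_space.emeasure_space_1[OF prob_space_exponential_density, of "l + \<beta>"] by simp
  finally show ?thesis
    by simp
qed

lemma emeasure_poisson_sum_ge:
  fixes B :: "'i set" and \<rho> :: real
  defines "P \<equiv> PiM UNIV (\<lambda>_::'i. measure_pmf (poisson_pmf \<rho>))"
  assumes "0 < \<rho>" and "finite B"
  shows "emeasure P {N \<in> space P. K \<le> real (\<Sum>x\<in>B. N x)} \<le> ennreal (exp (\<rho> * (exp 1 - 1) * card B - K))"
proof -
  have "emeasure P {N \<in> space P. K \<le> real (\<Sum>x\<in>B. N x)}
      \<le> ennreal (exp (- 1 * K)) * (\<integral>\<^sup>+N. ennreal (exp (1 * real (\<Sum>x\<in>B. N x))) * indicator (space P) N \<partial>P)"
    unfolding P_def by (intro Chernoff_ineq_nn_integral_ge) simp_all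
  also have "(\<integral>\<^sup>+N. ennreal (exp (1 * real (\<Sum>x\<in>B. N x))) * indicator (space P) N \<partial>P)
      = (\<integral>\<^sup>+N. (\<Prod>x\<in>B. ennreal (exp (1 * real (N x)))) \<partial>P)"
    using assms(3) by (intro nn_integral_cong) (simp add: prod_ennreal exp_sum)
  also have "\<dots> = (\<Prod>x\<in>B. \<integral>\<^sup>+n. ennreal (exp (1 * real n)) \<partial>measure_pmf (poisson_pmf \<rho>))"
    unfolding P_def using assms(3) by (intro nn_integral_PiM_prod) (simp_all add: prob_space_measure_pmf)
  also have "\<dots> = ennreal (exp (\<rho> * (exp 1 - 1)) ^ card B)"
    using assms(2) nn_integral_poisson_exp[of \<rho> 1] by (simp add: ennreal_power)
  also have "ennreal (exp (- 1 * K)) * \<dots> = ennreal (exp (\<rho> * (exp 1 - 1) * card B - K))"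
    by (simp add: ennreal_mult'[symmetric] exp_diff exp_of_nat_mult[symmetric] exp_minus
        mult_exp_exp field_simps mult_ac)
  finally show ?thesis .
qed

lemma emeasure_exponential_sum_le:
  fixes J :: "'i set"
  defines "T \<equiv> PiM UNIV (\<lambda>_::'i. density lborel (exponential_density 1))"
  assumes "finite J" and "0 < \<beta>"
  shows "emeasure T {\<tau> \<in> space T. (\<Sum>y\<in>J. \<tau> y) \<le> L} \<le> ennreal (exp (\<beta> * L) * (1 / (1 + \<beta>)) ^ card J)"
proof -
  have "emeasure T {\<tau> \<in> space T. (\<Sum>y\<in>J. \<tau> y) \<le> L}
      \<le> ennreal (exp (\<beta> * L)) * (\<integral>\<^sup>+\<tau>. ennreal (exp (- \<beta> * (\<Sum>y\<in>J. \<tau> y))) * indicator (space T) \<tau> \<partial>T)"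
    using assms(3) unfolding T_def by (intro Chernoff_ineq_nn_integral_le) simp_all
  also have "(\<integral>\<^sup>+\<tau>. ennreal (exp (- \<beta> * (\<Sum>y\<in>J. \<tau> y))) * indicator (space T) \<tau> \<partial>T)
      = (\<integral>\<^sup>+\<tau>. (\<Prod>y\<in>J. ennreal (exp (- \<beta> * \<tau> y))) \<partial>T)"
    using assms(2) by (intro nn_integral_cong) (simp add: prod_ennreal exp_sum sum_distrib_left)
  also have "\<dots> = (\<Prod>y\<in>J. \<integral>\<^sup>+s. ennreal (exp (- \<beta> * s)) \<partial>density lborel (exponential_density 1))"
    unfolding T_def using assms(2) by (intro nn_integral_PiM_prod prob_space_exponential_density) simp_all
  also have "\<dots> = ennreal ((1 / (1 + \<beta>)) ^ card J)"
    using assms(3) nn_integral_exponential_exp[of 1 \<beta>] by (simp add: ennreal_power)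
  also have "ennreal (exp (\<beta> * L)) * \<dots> = ennreal (exp (\<beta> * L) * (1 / (1 + \<beta>)) ^ card J)"
    using assms(3) by (simp add: ennreal_mult)
  finally show ?thesis .
qed

section \<open>Particles starting near and far from the origin\<close>

definition near_event :: "real \<Rightarrow> ('d::finite \<Rightarrow> int) pmf \<Rightarrow> nat \<Rightarrow> real \<Rightarrow> 'd irw_omega set" where
  "near_event \<rho> p R K = {\<omega> \<in> space (irw_space \<rho> p). K \<le> real (\<Sum>x\<in>{x. l1_norm x < R}. fst \<omega> x)}"

definition fast_far_event :: "real \<Rightarrow> ('d::finite \<Rightarrow> int) pmf \<Rightarrow> nat \<Rightarrow> real \<Rightarrow> 'd irw_omega set" where
  "fast_far_event \<rho> p R L = {\<omega> \<in> space (irw_space \<rho> p).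
     \<exists>x. R \<le> l1_norm x \<and> (\<exists>k<fst \<omega> x. jump_time \<omega> (x, k) (l1_norm x - 1) \<le> L)}"

lemma sets_near_event[measurable]: "near_event \<rho> p R K \<in> sets (irw_space \<rho> p)"
  unfolding near_event_def by measurable

lemma sets_fast_far_event[measurable]: "fast_far_event \<rho> p R L \<in> sets (irw_space \<rho> p)"
  unfolding fast_far_event_def by measurable

lemma occupation_imp_near_or_fast_far:
  fixes \<omega> :: "'d::finite irw_omega"
  assumes "nn_law p" and "admissible p \<omega>" and "1 \<le> R"
    and "\<exists>t\<in>{0..L}. ereal K \<le> ereal_of_enat (irw_eta \<omega> t (\<lambda>_. 0))"
  shows "K \<le> real (\<Sum>x\<in>{x. l1_norm x < R}. fst \<omega> x)
    \<or> (\<exists>x. R \<le> l1_norm x \<and> (\<exists>k<fst \<omega> x. jump_time \<omega> (x, k) (l1_norm x - 1) \<le> L))"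
proof (rule disjCI)
  assume no_fast_far: "\<not> (\<exists>x. R \<le> l1_norm x \<and> (\<exists>k<fst \<omega> x. jump_time \<omega> (x, k) (l1_norm x - 1) \<le> L))"
  from assms(4) obtain t where "t \<le> L" and K: "ereal K \<le> ereal_of_enat (irw_eta \<omega> t (\<lambda>_. 0))"
    by auto
  have "finite {x::'d \<Rightarrow> int. l1_norm x < R}"
    by (rule finite_subset[OF _ finite_l1_norm_le[of R]]) auto
  moreover have "l1_norm x < R" if "k < fst \<omega> x" and "irw_pos \<omega> x k t = (\<lambda>_. 0)" for x k
  proof (rule ccontr)
    assume "\<not> l1_norm x < R"
    moreover have "x - (\<lambda>_. 0) = x"
      by (simp add: fun_eq_iff)
    ultimately have "R \<le> l1_norm x" and "1 \<le> l1_norm (x - (\<lambda>_. 0))"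
      using assms(3) by simp_all
    have "jump_time \<omega> (x, k) (l1_norm x - 1) \<le> L"
      using jump_time_l1_distance_le[OF assms(1,2) that(2) \<open>1 \<le> l1_norm (x - (\<lambda>_. 0))\<close>] \<open>t \<le> L\<close>
        \<open>x - (\<lambda>_. 0) = x\<close> by simp
    with \<open>R \<le> l1_norm x\<close> that(1) no_fast_far show False
      by blast
  qed
  ultimately have "irw_eta \<omega> t (\<lambda>_. 0) \<le> enat (\<Sum>x\<in>{x. l1_norm x < R}. fst \<omega> x)"
    by (intro irw_eta_le_initial_mass) auto
  then have "ereal_of_enat (irw_eta \<omega> t (\<lambda>_. 0)) \<le> ereal (real (\<Sum>x\<in>{x. l1_norm x < R}. fst \<omega> x))"
    by (metis ereal_of_enat_le_iff ereal_of_enat_simps(1))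
  from order_trans[OF K this] show "K \<le> real (\<Sum>x\<in>{x. l1_norm x < R}. fst \<omega> x)"
    by simp
qed

lemma emeasure_initial_mass_ge:
  fixes B :: "('d::finite \<Rightarrow> int) set"
  assumes "0 < \<rho>" and "finite B"
  shows "emeasure (irw_space \<rho> p) {\<omega> \<in> space (irw_space \<rho> p). K \<le> real (\<Sum>x\<in>B. fst \<omega> x)}
    \<le> ennreal (exp (\<rho> * (exp 1 - 1) * card B - K))"
proof -
  let ?N = "initial_counts \<rho> :: (('d \<Rightarrow> int) \<Rightarrow> nat) measure"
  let ?TX = "(holding_times :: (('d \<Rightarrow> int) \<times> nat \<times> nat \<Rightarrow> real) measure) \<Otimes>\<^sub>M increments p"
  have "{\<omega> \<in> space (irw_space \<rho> p). K \<le> real (\<Sum>x\<in>B. fst \<omega> x)}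
      = {N \<in> space ?N. K \<le> real (\<Sum>x\<in>B. N x)} \<times> space ?TX"
    by (auto simp: irw_space_def space_pair_measure)
  moreover have "prob_space ?TX"
    by (intro prob_space_pair prob_space_PiM prob_space_exponential_density)
      (simp_all add: prob_space_measure_pmf)
  moreover have "{N \<in> space ?N. K \<le> real (\<Sum>x\<in>B. N x)} \<in> sets ?N"
    by measurable
  ultimately show ?thesis
    using emeasure_poisson_sum_ge[OF assms] by (simp add: irw_space_def emeasure_Times_space)
qed

lemma emeasure_initial_count_greater:
  fixes x :: "'d::finite \<Rightarrow> int"
  shows "emeasure (initial_counts \<rho>) {N \<in> space (initial_counts \<rho>). k < N x}
    = emeasure (measure_pmf (poisson_pmf \<rho>)) {k<..}"
proof -
  interpret product_prob_space "\<lambda>_::'d \<Rightarrow> int. measure_pmf (poisson_pmf \<rho>)" UNIV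
    by (rule product_prob_spaceI) (simp add: prob_space_measure_pmf)
  show ?thesis
    using emeasure_PiM_Collect_single[of x "{k<..}"] by simp
qed

lemma emeasure_fast_particle_from:
  fixes x :: "'d::finite \<Rightarrow> int"
  assumes "0 < \<rho>" and "0 < \<beta>" and "1 \<le> n"
  shows "emeasure (irw_space \<rho> p) {\<omega> \<in> space (irw_space \<rho> p). \<exists>k<fst \<omega> x. jump_time \<omega> (x, k) (n - 1) \<le> L}
    \<le> ennreal (\<rho> * exp (\<beta> * L) / (1 + \<beta>) ^ n)"
proof -
  let ?M = "irw_space \<rho> p"
  let ?N = "initial_counts \<rho> :: (('d \<Rightarrow> int) \<Rightarrow> nat) measure"
  let ?T = "holding_times :: (('d \<Rightarrow> int) \<times> nat \<times> nat \<Rightarrow> real) measure"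
  let ?X = "increments p"
  let ?Q = "exp (\<beta> * L) * (1 / (1 + \<beta>)) ^ n"
  define J where "J k = (\<lambda>i. (x, k, i)) ` {..n - 1}" for k :: nat
  define A where "A k = {N \<in> space ?N. k < N x}" for k :: nat
  define E where "E k = {\<tau> \<in> space ?T. (\<Sum>y\<in>J k. \<tau> y) \<le> L}" for k
  have [measurable]: "A k \<in> sets ?N" "E k \<in> sets ?T" for k
    unfolding A_def E_def by measurable
  have "jump_time \<omega> (x, k) (n - 1) = (\<Sum>y\<in>J k. fst (snd \<omega>) y)" for \<omega> k
    by (simp add: J_def jump_time_def sum.reindex inj_on_def)
  then have "{\<omega> \<in> space ?M. \<exists>k<fst \<omega> x. jump_time \<omega> (x, k) (n - 1) \<le> L}
      = (\<Union>k. A k \<times> (E k \<times> space ?X))"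
    by (auto simp: irw_space_def space_pair_measure A_def E_def)
  then have "emeasure ?M {\<omega> \<in> space ?M. \<exists>k<fst \<omega> x. jump_time \<omega> (x, k) (n - 1) \<le> L}
      \<le> (\<Sum>k. emeasure ?M (A k \<times> (E k \<times> space ?X)))"
    by (simp only:) (intro emeasure_subadditive_countably, auto simp: irw_space_def)
  also have "\<dots> \<le> (\<Sum>k. emeasure (measure_pmf (poisson_pmf \<rho>)) {k<..} * ennreal ?Q)"
  proof (intro suminf_le summableI)
    fix k
    have "card (J k) = n" and "finite (J k)"
      using \<open>1 \<le> n\<close> by (simp_all add: J_def card_image inj_on_def)
    then have "emeasure ?T (E k) \<le> ennreal ?Q"
      using emeasure_exponential_sum_le[OF _ \<open>0 < \<beta>\<close>, of "J k" L] by (simp add: E_def)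
    then show "emeasure ?M (A k \<times> (E k \<times> space ?X)) \<le> emeasure (measure_pmf (poisson_pmf \<rho>)) {k<..} * ennreal ?Q"
      by (simp add: emeasure_irw_space_Times A_def emeasure_initial_count_greater mult_left_mono)
  qed
  also have "\<dots> = ennreal \<rho> * ennreal ?Q"
    using \<open>0 < \<rho>\<close> by (simp add: ennreal_suminf_multc suminf_emeasure_greaterThan_pmf nn_integral_poisson_mean)
  also have "\<dots> = ennreal (\<rho> * exp (\<beta> * L) / (1 + \<beta>) ^ n)"
    using \<open>0 < \<rho>\<close> \<open>0 < \<beta>\<close> by (simp add: ennreal_mult[symmetric] power_one_over)
  finally show ?thesis .
qed

lemma emeasure_fast_far_event_le_suminf:
  fixes p :: "('d::finite \<Rightarrow> int) pmf"
  assumes "0 < \<rho>" and "0 < \<beta>" and "1 \<le> R"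
  shows "emeasure (irw_space \<rho> p) (fast_far_event \<rho> p R L)
    \<le> ennreal (\<rho> * exp (\<beta> * L)) * (\<Sum>n. ennreal (indicator {R..} n * real ((2 * n + 1) ^ CARD('d)) / (1 + \<beta>) ^ n))"
proof -
  let ?M = "irw_space \<rho> p"
  define F where "F x = {\<omega> \<in> space ?M. \<exists>k<fst \<omega> x. jump_time \<omega> (x, k) (l1_norm x - 1) \<le> L}"
    for x :: "'d \<Rightarrow> int"
  define g where "g n = ennreal (\<rho> * exp (\<beta> * L)) * ennreal (indicator {R..} n / (1 + \<beta>) ^ n)" for n
  have [measurable]: "F x \<in> sets ?M" for x
    unfolding F_def by measurable
  have "fast_far_event \<rho> p R L = \<Union>(F ` {x. R \<le> l1_norm x})"
    by (auto simp: fast_far_event_def F_def)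
  then have "emeasure ?M (fast_far_event \<rho> p R L) \<le> (\<integral>\<^sup>+x. emeasure ?M (F x) \<partial>count_space {x. R \<le> l1_norm x})"
    by (simp only:) (intro emeasure_UN_countable_le, simp_all)
  also have "\<dots> = (\<integral>\<^sup>+x. emeasure ?M (F x) * indicator {x. R \<le> l1_norm x} x \<partial>count_space UNIV)"
    by (rule nn_integral_count_space_indicator) (simp add: NO_MATCH_def)
  also have "\<dots> \<le> (\<integral>\<^sup>+x. g (l1_norm (x::'d \<Rightarrow> int)) \<partial>count_space UNIV)"
  proof (intro nn_integral_mono)
    fix x :: "'d \<Rightarrow> int"
    show "emeasure ?M (F x) * indicator {x. R \<le> l1_norm x} x \<le> g (l1_norm x)"
    proof (cases "R \<le> l1_norm x")
      case True
      then have "emeasure ?M (F x) \<le> ennreal (\<rho> * exp (\<beta> * L) / (1 + \<beta>) ^ l1_norm x)"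
        unfolding F_def using assms by (intro emeasure_fast_particle_from) simp_all
      with True assms(1,2) show ?thesis
        by (simp add: g_def ennreal_mult'[symmetric])
    qed (simp add: g_def)
  qed
  also have "\<dots> \<le> (\<Sum>n. g n * of_nat ((2 * n + 1) ^ CARD('d)))"
    by (rule nn_integral_l1_norm_le)
  also have "\<dots> = ennreal (\<rho> * exp (\<beta> * L)) * (\<Sum>n. ennreal (indicator {R..} n * real ((2 * n + 1) ^ CARD('d)) / (1 + \<beta>) ^ n))"
    using assms(2) unfolding g_def ennreal_suminf_cmult[symmetric] mult.assoc
    by (simp add: ennreal_of_nat_eq_real_of_nat ennreal_mult'[symmetric])
  finally show ?thesis .
qed

text \<open>Particles starting at distance beyond \<open>reach_factor d * L\<close> rarely reach the origin by
  time \<open>L\<close>; the value is chosen so that \<open>(2 n + 1) ^ d / (1 + reach_factor d) ^ n \<le> exp (- 3 n)\<close>.\<close>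

definition reach_factor :: "nat \<Rightarrow> real" where
  "reach_factor d = 3 ^ d * exp 3 - 1"

lemma two_le_reach_factor: "2 \<le> reach_factor d"
proof -
  have "1 + 3 \<le> exp (3::real)"
    by (rule exp_ge_add_one_self)
  moreover have "exp 3 \<le> 3 ^ d * exp (3::real)"
    by simp
  ultimately show ?thesis
    unfolding reach_factor_def by linarith
qed

lemma two_mult_plus_one_le_three_power: "2 * n + 1 \<le> (3::nat) ^ n"
proof (induction n)
  case (Suc n)
  moreover have "1 \<le> (3::nat) ^ n"
    by simp
  ultimately show ?case
    by simp
qed simp

lemma lattice_shell_term_le:
  assumes "R \<le> n"
  shows "real ((2 * n + 1) ^ d) / (1 + reach_factor d) ^ n \<le> exp (- 2 * real R) * exp (-1) ^ n"
proof -
  have "real ((2 * n + 1) ^ d) \<le> real ((3 ^ n) ^ d)"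
    by (simp only: of_nat_le_iff) (intro power_mono two_mult_plus_one_le_three_power, simp)
  also have "\<dots> = (3 ^ d) ^ n"
    by (simp add: power_mult[symmetric] mult.commute)
  finally have "real ((2 * n + 1) ^ d) / (1 + reach_factor d) ^ n \<le> (3 ^ d) ^ n / (1 + reach_factor d) ^ n"
    by (intro divide_right_mono) (use two_le_reach_factor[of d] in simp_all)
  also have "\<dots> = exp (- 3 * real n)"
    by (simp add: reach_factor_def power_mult_distrib exp_minus inverse_eq_divide flip: exp_of_nat_mult)
  also have "\<dots> \<le> exp (- 2 * real R - real n)"
    using assms by simp
  also have "\<dots> = exp (- 2 * real R) * exp (-1) ^ n"
    by (simp add: mult_exp_exp flip: exp_of_nat_mult)
  finally show ?thesis .
qed

lemma suminf_lattice_shells_le: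
  fixes d R :: nat
  shows "(\<Sum>n. ennreal (indicator {R..} n * real ((2 * n + 1) ^ d) / (1 + reach_factor d) ^ n))
    \<le> ennreal (2 * exp (- 2 * real R))"
proof -
  define C where "C = exp (- 2 * real R)"
  have "(\<lambda>n. exp (-1::real) ^ n) sums (1 / (1 - exp (-1)))"
    by (rule geometric_sums) simp
  from sums_mult[OF this, of C] have geometric: "(\<lambda>n. C * exp (-1) ^ n) sums (C / (1 - exp (-1)))"
    by simp
  have "(\<Sum>n. ennreal (indicator {R..} n * real ((2 * n + 1) ^ d) / (1 + reach_factor d) ^ n))
      \<le> (\<Sum>n. ennreal (C * exp (-1) ^ n))"
    using lattice_shell_term_le unfolding C_def
    by (intro suminf_le summableI ennreal_leI) (simp split: split_indicator)
  also have "\<dots> = ennreal (C / (1 - exp (-1)))"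
    using geometric by (intro suminf_ennreal2[THEN trans] arg_cong[where f = ennreal] sums_unique[symmetric])
      (auto simp: C_def intro: sums_summable)
  also have "\<dots> \<le> ennreal (2 * C)"
  proof (intro ennreal_leI)
    have "2 \<le> exp (1::real)"
      using exp_ge_add_one_self[of 1] by simp
    then have "1 / 2 \<le> 1 - exp (-1::real)"
      by (simp add: exp_minus field_simps)
    then have "C / (1 - exp (-1)) \<le> C / (1 / 2)"
      by (intro divide_left_mono) (simp_all add: C_def)
    then show "C / (1 - exp (-1)) \<le> 2 * C"
      by simp
  qed
  finally show ?thesis
    by (simp add: C_def)
qed

lemma initial_mass_exponent_le:
  fixes L \<rho> \<beta> :: real and R d N :: nat
  assumes "1 \<le> L" and "0 < \<rho>" and "\<rho> \<le> L ^ 2" and "0 \<le> \<beta>"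
    and "4 * (2 * \<beta> + 3) ^ d \<le> L ^ 2" and "real R \<le> \<beta> * L + 1" and "N \<le> (2 * R + 1) ^ d"
  shows "\<rho> * (exp 1 - 1) * N - L ^ (d + 4) \<le> - L / 2"
proof -
  have "real (2 * R + 1) \<le> (2 * \<beta> + 3) * L"
    using assms(1,4,6) by (simp add: algebra_simps)
  then have N: "real N \<le> ((2 * \<beta> + 3) * L) ^ d"
    using assms(7) by (metis of_nat_le_iff of_nat_power order_trans power_mono of_nat_0_le_iff)
  have \<rho>: "\<rho> * (exp 1 - 1) \<le> L ^ 2 * 2"
    using assms(2,3) exp_le by (intro mult_mono) simp_all
  have "\<rho> * (exp 1 - 1) * N \<le> L ^ 2 * 2 * ((2 * \<beta> + 3) * L) ^ d"
    by (rule mult_mono[OF \<rho> N]) simp_all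
  also have "\<dots> = 2 * (2 * \<beta> + 3) ^ d * L ^ (d + 2)"
    by (simp add: power_mult_distrib power_add power2_eq_square mult_ac)
  also have "\<dots> \<le> (L ^ 2 / 2) * L ^ (d + 2)"
    using assms(1,5) by (intro mult_right_mono) simp_all
  also have "\<dots> = L ^ (d + 4) / 2"
    by (simp add: power_add power2_eq_square numeral_eq_Suc mult_ac)
  finally have "\<rho> * (exp 1 - 1) * N - L ^ (d + 4) \<le> - (L ^ (d + 4)) / 2"
    by simp
  also have "\<dots> \<le> - L / 2"
    using assms(1) power_increasing[of 1 "d + 4" L] by simp
  finally show ?thesis .
qed

lemma fast_far_bound_le:
  fixes L \<rho> \<beta> :: real and R :: nat
  assumes "1 \<le> L" and "0 < \<rho>" and "\<rho> \<le> L ^ 2" and "2 \<le> \<beta>" and "\<beta> * L \<le> real R"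
  shows "2 * \<rho> * exp (\<beta> * L) * exp (- 2 * real R) \<le> 8 * exp (- L)"
proof -
  have "2 * L \<le> \<beta> * L"
    using assms(1,4) by (intro mult_right_mono) simp_all
  with assms(5) have "\<beta> * L - 2 * real R \<le> - 2 * L"
    by linarith
  then have "exp (\<beta> * L) * exp (- 2 * real R) \<le> exp (- 2 * L)"
    by (simp add: mult_exp_exp)
  moreover have "L ^ 2 \<le> 4 * exp L"
  proof -
    have "L \<le> 2 * exp (L / 2)"
      using exp_ge_add_one_self[of "L / 2"] by linarith
    then have "L ^ 2 \<le> (2 * exp (L / 2)) ^ 2"
      using assms(1) by (intro power_mono) simp_all
    then show ?thesis
      by (simp add: power2_eq_square mult_exp_exp)
  qed
  ultimately have "\<rho> * (exp (\<beta> * L) * exp (- 2 * real R)) \<le> 4 * exp L * exp (- 2 * L)"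
    using assms(3) by (intro mult_mono) simp_all
  also have "\<dots> = 4 * exp (- L)"
    by (simp add: mult.assoc mult_exp_exp)
  finally show ?thesis
    by (simp add: mult_ac)
qed

lemma measure_near_event_le:
  fixes p :: "('d::finite \<Rightarrow> int) pmf"
  assumes "1 \<le> L" and "0 < \<rho>" and "\<rho> \<le> L ^ 2" and "0 \<le> \<beta>"
    and "4 * (2 * \<beta> + 3) ^ CARD('d) \<le> L ^ 2" and "real R \<le> \<beta> * L + 1"
  shows "measure (irw_space \<rho> p) (near_event \<rho> p R (L ^ (CARD('d) + 4))) \<le> exp (- L / 2)"
proof -
  interpret prob_space "irw_space \<rho> p"
    by (rule prob_space_irw_space)
  let ?B = "{x::'d \<Rightarrow> int. l1_norm x < R}"
  have "finite ?B"
    by (rule finite_subset[OF _ finite_l1_norm_le[of R]]) auto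
  then have "emeasure (irw_space \<rho> p) (near_event \<rho> p R (L ^ (CARD('d) + 4)))
      \<le> ennreal (exp (\<rho> * (exp 1 - 1) * card ?B - L ^ (CARD('d) + 4)))"
    unfolding near_event_def using assms(2) by (intro emeasure_initial_mass_ge)
  moreover have "card ?B \<le> (2 * R + 1) ^ CARD('d)"
    by (rule order_trans[OF card_mono[OF finite_l1_norm_le] card_l1_norm_le]) auto
  then have "\<rho> * (exp 1 - 1) * card ?B - L ^ (CARD('d) + 4) \<le> - L / 2"
    using assms by (intro initial_mass_exponent_le)
  ultimately show ?thesis
    by (simp add: emeasure_eq_measure order_trans)
qed

lemma measure_fast_far_event_le:
  fixes p :: "('d::finite \<Rightarrow> int) pmf"
  defines "\<beta> \<equiv> reach_factor CARD('d)"
  assumes "1 \<le> L" and "0 < \<rho>" and "\<rho> \<le> L ^ 2" and "\<beta> * L \<le> real R"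
  shows "measure (irw_space \<rho> p) (fast_far_event \<rho> p R L) \<le> 8 * exp (- L)"
proof -
  interpret prob_space "irw_space \<rho> p"
    by (rule prob_space_irw_space)
  have "2 \<le> \<beta>"
    unfolding \<beta>_def by (rule two_le_reach_factor)
  with assms(2,5) have "1 \<le> R"
    using mult_mono[of 2 \<beta> 1 L] by linarith
  with \<open>2 \<le> \<beta>\<close> assms(3) have "emeasure (irw_space \<rho> p) (fast_far_event \<rho> p R L)
      \<le> ennreal (\<rho> * exp (\<beta> * L)) * (\<Sum>n. ennreal (indicator {R..} n * real ((2 * n + 1) ^ CARD('d)) / (1 + \<beta>) ^ n))"
    by (intro emeasure_fast_far_event_le_suminf) simp_all
  also have "\<dots> \<le> ennreal (\<rho> * exp (\<beta> * L)) * ennreal (2 * exp (- 2 * real R))"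
    unfolding \<beta>_def by (intro mult_left_mono suminf_lattice_shells_le) simp
  finally have "emeasure (irw_space \<rho> p) (fast_far_event \<rho> p R L)
      \<le> ennreal (\<rho> * exp (\<beta> * L)) * ennreal (2 * exp (- 2 * real R))" .
  then have "measure (irw_space \<rho> p) (fast_far_event \<rho> p R L) \<le> 2 * \<rho> * exp (\<beta> * L) * exp (- 2 * real R)"
    using assms(3) by (simp add: emeasure_eq_measure ennreal_mult'[symmetric] mult_ac)
  also have "\<dots> \<le> 8 * exp (- L)"
    using assms(2-5) \<open>2 \<le> \<beta>\<close> by (intro fast_far_bound_le)
  finally show ?thesis .
qed

lemma measure_occupation_event_le:
  fixes p :: "('d::finite \<Rightarrow> int) pmf"
  defines "\<beta> \<equiv> reach_factor CARD('d)"
  assumes "nn_law p" and "1 \<le> L" and "0 < \<rho>" and "\<rho> \<le> L ^ 2"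
    and "4 * (2 * \<beta> + 3) ^ CARD('d) \<le> L ^ 2"
  shows "measure (irw_space \<rho> p) (occupation_event \<rho> p L (L ^ (CARD('d) + 4)) (\<lambda>_. 0)) \<le> 9 * exp (- L / 2)"
proof -
  let ?M = "irw_space \<rho> p"
  let ?K = "L ^ (CARD('d) + 4)"
  interpret prob_space ?M
    by (rule prob_space_irw_space)
  define R where "R = nat \<lceil>\<beta> * L\<rceil>"
  have "2 \<le> \<beta>"
    unfolding \<beta>_def by (rule two_le_reach_factor)
  then have R: "\<beta> * L \<le> real R" "real R \<le> \<beta> * L + 1" "1 \<le> R"
    using assms(3) mult_mono[of 2 \<beta> 1 L] unfolding R_def by linarith+
  have "AE \<omega> in ?M. \<omega> \<in> occupation_event \<rho> p L ?K (\<lambda>_. 0) \<longrightarrow> \<omega> \<in> near_event \<rho> p R ?K \<union> fast_far_event \<rho> p R L"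
    using AE_admissible
  proof eventually_elim
    case (elim \<omega>)
    then show ?case
      using occupation_imp_near_or_fast_far[OF assms(2) elim R(3)]
      by (auto simp: occupation_event_def near_event_def fast_far_event_def)
  qed
  then have "measure ?M (occupation_event \<rho> p L ?K (\<lambda>_. 0)) \<le> measure ?M (near_event \<rho> p R ?K \<union> fast_far_event \<rho> p R L)"
    by (intro finite_measure_mono_AE) simp_all
  also have "\<dots> \<le> measure ?M (near_event \<rho> p R ?K) + measure ?M (fast_far_event \<rho> p R L)"
    by (rule measure_Un_le) simp_all
  also have "\<dots> \<le> exp (- L / 2) + 8 * exp (- L)"
    using assms(3-6) R \<open>2 \<le> \<beta>\<close> unfolding \<beta>_def
    by (intro add_mono measure_near_event_le measure_fast_far_event_le) simp_all
  also have "\<dots> \<le> 9 * exp (- L / 2)"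
    using assms(3) by simp
  finally show ?thesis .
qed

definition decay_const :: "nat \<Rightarrow> real" where
  "decay_const d = 9 + 4 * (2 * reach_factor d + 3) ^ d"

lemma nine_le_decay_const: "9 \<le> decay_const d"
  using two_le_reach_factor[of d] by (simp add: decay_const_def)

lemma measure_occupation_event_le_decay_const:
  fixes p :: "('d::finite \<Rightarrow> int) pmf"
  defines "c \<equiv> decay_const CARD('d)"
  assumes "nn_law p" and L: "1 \<le> L" and "0 < \<rho>" and "\<rho> \<le> L ^ 2"
  shows "measure (irw_space \<rho> p) (occupation_event \<rho> p L (L ^ (CARD('d) + 4)) (\<lambda>_. 0)) \<le> c * exp (- L / c)"
proof (cases "4 * (2 * reach_factor CARD('d) + 3) ^ CARD('d) \<le> L ^ 2")
  case True
  with assms(2-5) have "measure (irw_space \<rho> p) (occupation_event \<rho> p L (L ^ (CARD('d) + 4)) (\<lambda>_. 0))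
      \<le> 9 * exp (- L / 2)"
    by (rule measure_occupation_event_le)
  also have "\<dots> \<le> c * exp (- L / c)"
    using nine_le_decay_const[of "CARD('d)"] L divide_left_mono[of 2 c L] unfolding c_def
    by (intro mult_mono) simp_all
  finally show ?thesis .
next
  case False
  moreover have "L \<le> L ^ 2"
    using mult_right_mono[OF L, of L] L by (simp add: power2_eq_square)
  ultimately have "L \<le> c"
    by (simp add: c_def decay_const_def)
  with nine_le_decay_const[of "CARD('d)"] have "9 * exp (- 1) \<le> c * exp (- L / c)"
    unfolding c_def by (intro mult_mono) simp_all
  moreover have "1 \<le> 9 * exp (- 1 :: real)"
    using exp_le by (simp add: exp_minus field_simps)
  ultimately show ?thesis
    using prob_space.prob_le_1[OF prob_space_irw_space] by (meson order_trans)
qed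

theorem lemma5p1:
  fixes p :: "('d::finite \<Rightarrow> int) pmf"
  assumes "nn_law p"
  shows "\<exists>c>0. \<forall>L::real. \<forall>\<rho>::real. 1 \<le> L \<longrightarrow> 0 < \<rho> \<longrightarrow> \<rho> \<le> L ^ 2 \<longrightarrow>
    (let M = irw_space \<rho> p;
         A = {\<omega> \<in> space M. \<exists>t\<in>{0..L}.
                ereal (L ^ (CARD('d) + 4)) \<le> ereal_of_enat (irw_eta \<omega> t (\<lambda>_. 0))}
     in A \<in> sets M \<and> measure M A \<le> c * exp (- L / c))"
proof -
  let ?c = "decay_const CARD('d)"
  have "measure (irw_space \<rho> p) (occupation_event \<rho> p L (L ^ (CARD('d) + 4)) (\<lambda>_. 0)) \<le> ?c * exp (- L / ?c)"
    if "1 \<le> L" and "0 < \<rho>" and "\<rho> \<le> L ^ 2" for L \<rho>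
    using measure_occupation_event_le_decay_const[OF assms that] .
  moreover have "0 < ?c"
    using nine_le_decay_const[of "CARD('d)"] by simp
  ultimately show ?thesis
    by (intro exI[of _ ?c]) (simp add: Let_def occupation_event_def[symmetric])
qed
end
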